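(* Let $(\Omega,\mathcal{F},(\mathcal{F}_t)_{t\in[0,T]},P)$ be a filtered probability space, $T>0$, and let $(X_t)_{t\in[0,T]}$ be a continuous martingale whose initial value $X_0$ is a deterministic constant. Let $M_T=\max_{0\le s\le T}X_s$. Then $$E\left(M_T\right)\le\sqrt{2}\,E\left(X_T^2\right)^{1/2}.$$ *)

theory Defs
  imports "HOL-Probability.Probability"
begin

definition cont_martingale ::
  "'a measure \<Rightarrow> (real \<Rightarrow> 'a measure) \<Rightarrow> real \<Rightarrow> (real \<Rightarrow> 'a \<Rightarrow> real) \<Rightarrow> bool" where
  "cont_martingale M F T X \<longleftrightarrow>
     prob_space M \<and>
     (\<forall>t\<in>{0..T}. subalgebra M (F t)) \<and>
     (\<forall>s t. 0 \<le> s \<longrightarrow> s \<le> t \<longrightarrow> t \<le> T \<longrightarrow> sets (F s) \<subseteq> sets (F t)) \<and>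
     (\<forall>t\<in>{0..T}. X t \<in> borel_measurable (F t)) \<and>
     (\<forall>t\<in>{0..T}. integrable M (X t)) \<and>
     (\<forall>s t. 0 \<le> s \<longrightarrow> s \<le> t \<longrightarrow> t \<le> T \<longrightarrow>
        (AE \<omega> in M. real_cond_exp M (F s) (X t) \<omega> = X s \<omega>)) \<and>
     (\<forall>\<omega>\<in>space M. continuous_on {0..T} (\<lambda>t. X t \<omega>))"

end

theory Submission
  imports Defs
begin

text \<open>Let \<open>S\<^sub>k = max {Y\<^sub>0, ..., Y\<^sub>k}\<close> be the running maximum of a square-integrable
  discrete martingale \<open>Y\<close>. The pathwise inequality
  \<open>(S\<^sub>m - Y\<^sub>m)\<^sup>2 - (Y\<^sub>m - Y\<^sub>0)\<^sup>2 \<le> -2 \<Sum>j<m. (S\<^sub>j - Y\<^sub>0) (Y\<^sub>j\<^sub>+\<^sub>1 - Y\<^sub>j)\<close>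
  has a martingale transform on the right, whose expectation vanishes. Hence
  \<open>E (S\<^sub>m - Y\<^sub>m)\<^sup>2 \<le> E (Y\<^sub>m - Y\<^sub>0)\<^sup>2 = E Y\<^sub>m\<^sup>2 - E Y\<^sub>0\<^sup>2\<close>, and with \<open>c = E Y\<^sub>0 = E Y\<^sub>m\<close>
  Jensen's inequality gives \<open>(E S\<^sub>m - c)\<^sup>2 \<le> E Y\<^sub>m\<^sup>2 - c\<^sup>2\<close>, which forces
  \<open>E S\<^sub>m \<le> sqrt 2 * sqrt (E Y\<^sub>m\<^sup>2)\<close>. For a continuous martingale, apply this to its
  samples on the dyadic grids of \<open>[0,T]\<close>: by continuity the dyadic maxima increase to
  \<open>M\<^sub>T\<close>, and monotone convergence carries the bound over to the limit.\<close>

text \<open>Equality holds if \<open>y' \<le> s\<close>; a new maximum \<open>y' > s\<close> leaves the slack \<open>(y' - s)\<^sup>2\<close>.\<close>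

lemma running_max_step_le:
  fixes c s y y' :: real
  shows "(max y' s - y')\<^sup>2 - (y' - c)\<^sup>2 \<le> (s - y)\<^sup>2 - (y - c)\<^sup>2 - 2 * ((s - c) * (y' - y))"
proof (cases "y' \<le> s")
  case True
  then show ?thesis by (simp add: max_def power2_eq_square algebra_simps)
next
  case False
  have "0 \<le> (y' - s)\<^sup>2" by simp
  with False show ?thesis by (simp add: max_def power2_eq_square algebra_simps)
qed

lemma running_max_pathwise_le:
  fixes y :: "nat \<Rightarrow> real"
  shows "(Max (y ` {..k}) - y k)\<^sup>2 - (y k - y 0)\<^sup>2
           \<le> - 2 * (\<Sum>j<k. (Max (y ` {..j}) - y 0) * (y (Suc j) - y j))"
proof (induction k)
  case 0
  then show ?case by simp
next
  case (Suc k)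
  have max_Suc: "Max (y ` {..Suc k}) = max (y (Suc k)) (Max (y ` {..k}))"
    by (simp add: atMost_Suc)
  have sum_Suc: "(\<Sum>j<Suc k. (Max (y ` {..j}) - y 0) * (y (Suc j) - y j))
      = (\<Sum>j<k. (Max (y ` {..j}) - y 0) * (y (Suc j) - y j))
        + (Max (y ` {..k}) - y 0) * (y (Suc k) - y k)"
    by simp
  show ?case
    unfolding max_Suc sum_Suc distrib_left
    using Suc running_max_step_le[of "y (Suc k)" "Max (y ` {..k})" "y 0" "y k"] by linarith
qed

lemma le_sqrt_two_mult_sqrt:
  fixes e c V W :: real
  assumes "(e - c)\<^sup>2 \<le> V - W" and "c\<^sup>2 \<le> W"
  shows "e \<le> sqrt 2 * sqrt V"
proof (cases "e \<le> 0")
  case True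
  have "0 \<le> V" using assms by (smt (verit) zero_le_power2)
  then have "0 \<le> sqrt 2 * sqrt V" by simp
  with True show ?thesis by linarith
next
  case False
  have "2 * c * (e - c) \<le> c\<^sup>2 + (e - c)\<^sup>2" by (rule sum_squares_bound)
  then have "e\<^sup>2 \<le> 2 * V" using assms by (simp add: power2_eq_square algebra_simps)
  then have "e \<le> sqrt (2 * V)" by (rule real_le_rsqrt)
  then show ?thesis by (simp add: real_sqrt_mult)
qed

lemma integrable_mult_of_square_integrable:
  fixes f g :: "'a \<Rightarrow> real"
  assumes "f \<in> borel_measurable M" "g \<in> borel_measurable M"
    and "integrable M (\<lambda>x. (f x)\<^sup>2)" "integrable M (\<lambda>x. (g x)\<^sup>2)"
  shows "integrable M (\<lambda>x. f x * g x)"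
proof (rule Bochner_Integration.integrable_bound)
  show "integrable M (\<lambda>x. (f x)\<^sup>2 + (g x)\<^sup>2)" using assms by simp
  have "\<bar>a * b\<bar> \<le> a\<^sup>2 + b\<^sup>2" for a b :: real
  proof -
    have "2 * (\<bar>a\<bar> * \<bar>b\<bar>) \<le> a\<^sup>2 + b\<^sup>2"
      using sum_squares_bound[of "\<bar>a\<bar>" "\<bar>b\<bar>"] by (simp add: mult.assoc)
    moreover have "0 \<le> \<bar>a\<bar> * \<bar>b\<bar>" by simp
    ultimately have "\<bar>a\<bar> * \<bar>b\<bar> \<le> a\<^sup>2 + b\<^sup>2" by linarith
    then show ?thesis by (simp add: abs_mult)
  qed
  then show "AE x in M. norm (f x * g x) \<le> norm ((f x)\<^sup>2 + (g x)\<^sup>2)"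
    by (intro always_eventually) auto
qed (use assms in simp)

lemma square_integrable_diff:
  fixes f g :: "'a \<Rightarrow> real"
  assumes "f \<in> borel_measurable M" "g \<in> borel_measurable M"
    and "integrable M (\<lambda>x. (f x)\<^sup>2)" "integrable M (\<lambda>x. (g x)\<^sup>2)"
  shows "integrable M (\<lambda>x. (f x - g x)\<^sup>2)"
proof -
  have "(f x - g x)\<^sup>2 = (f x)\<^sup>2 - 2 * (f x * g x) + (g x)\<^sup>2" for x
    by (simp add: power2_eq_square algebra_simps)
  moreover have "integrable M (\<lambda>x. (f x)\<^sup>2 - 2 * (f x * g x) + (g x)\<^sup>2)"
    using assms integrable_mult_of_square_integrable[OF assms] by simp
  ultimately show ?thesis by simp
qed

lemma (in prob_space) square_expectation_le:
  fixes f :: "'a \<Rightarrow> real"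
  assumes "integrable M f" "integrable M (\<lambda>x. (f x)\<^sup>2)"
  shows "(expectation f)\<^sup>2 \<le> expectation (\<lambda>x. (f x)\<^sup>2)"
  using variance_positive[of f] variance_eq[OF assms] by simp

lemma (in sigma_finite_subalgebra) integral_mult_eq_of_real_cond_exp:
  assumes "H \<in> borel_measurable F" "Z \<in> borel_measurable M"
    and "integrable M (\<lambda>x. H x * Z x)" "integrable M (\<lambda>x. H x * Y x)"
    and "AE x in M. real_cond_exp M F Z x = Y x"
  shows "(\<integral>x. H x * Z x \<partial>M) = (\<integral>x. H x * Y x \<partial>M)"
proof -
  have "(\<integral>x. H x * Z x \<partial>M) = (\<integral>x. H x * real_cond_exp M F Z x \<partial>M)"
    using real_cond_exp_intg(2)[OF assms(3,1,2)] by simp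
  also have "\<dots> = (\<integral>x. H x * Y x \<partial>M)"
  proof (rule integral_cong_AE)
    show "(\<lambda>x. H x * real_cond_exp M F Z x) \<in> borel_measurable M"
      using assms(1) by (auto intro: measurable_from_subalg[OF subalg])
    show "AE x in M. H x * real_cond_exp M F Z x = H x * Y x"
      using assms(5) by eventually_elim simp
  qed (use assms(4) in simp)
  finally show ?thesis .
qed

lemma (in sigma_finite_subalgebra) square_integrable_real_cond_exp:
  assumes "integrable M f" "integrable M (\<lambda>x. (f x)\<^sup>2)"
  shows "integrable M (\<lambda>x. (real_cond_exp M F f x)\<^sup>2)"
  by (rule integrable_convex_cond_exp[of f UNIV]) (use assms convex_power2 in auto)

locale finite_martingale = prob_space M for M :: "'a measure" +
  fixes G :: "nat \<Rightarrow> 'a measure" and Y :: "nat \<Rightarrow> 'a \<Rightarrow> real" and m :: nat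
  assumes subalgebra_filtration: "\<And>k. k \<le> m \<Longrightarrow> subalgebra M (G k)"
    and filtration_mono: "\<And>i k. i \<le> k \<Longrightarrow> k \<le> m \<Longrightarrow> sets (G i) \<subseteq> sets (G k)"
    and adapted: "\<And>k. k \<le> m \<Longrightarrow> Y k \<in> borel_measurable (G k)"
    and integrable_process: "\<And>k. k \<le> m \<Longrightarrow> integrable M (Y k)"
    and martingale_step:
      "\<And>k. k < m \<Longrightarrow> AE x in M. real_cond_exp M (G k) (Y (Suc k)) x = Y k x"
begin

lemma measurable_filtration_mono:
  assumes "i \<le> k" "k \<le> m" "f \<in> borel_measurable (G i)"
  shows "f \<in> borel_measurable (G k)"
proof (rule measurable_from_subalg[OF _ assms(3)])
  show "subalgebra (G k) (G i)"
    using subalgebra_filtration[of i] subalgebra_filtration[of k] filtration_mono[of i k] assms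
    by (auto simp: subalgebra_def)
qed

lemma measurable_process: "k \<le> m \<Longrightarrow> Y k \<in> borel_measurable M"
  using measurable_from_subalg[OF subalgebra_filtration adapted] by blast

lemma sigma_finite_subalgebra_filtration: "k \<le> m \<Longrightarrow> sigma_finite_subalgebra M (G k)"
  by (intro finite_measure_subalgebra_is_sigma_finite)
     (simp add: finite_measure_subalgebra_def finite_measure_subalgebra_axioms_def
        finite_measure_axioms subalgebra_filtration)

lemma integral_mult_eq:
  assumes "k \<le> j" "j \<le> m" "H \<in> borel_measurable (G k)"
    and "\<And>i. k \<le> i \<Longrightarrow> i \<le> j \<Longrightarrow> integrable M (\<lambda>x. H x * Y i x)"
  shows "(\<integral>x. H x * Y j x \<partial>M) = (\<integral>x. H x * Y k x \<partial>M)"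
  using assms(1)
proof (induction j rule: dec_induct)
  case base
  show ?case ..
next
  case (step n)
  have "(\<integral>x. H x * Y (Suc n) x \<partial>M) = (\<integral>x. H x * Y n x \<partial>M)"
  proof (rule sigma_finite_subalgebra.integral_mult_eq_of_real_cond_exp)
    show "sigma_finite_subalgebra M (G n)"
      using step assms(2) by (intro sigma_finite_subalgebra_filtration) simp
    show "H \<in> borel_measurable (G n)"
      using step assms(2) by (intro measurable_filtration_mono[OF _ _ assms(3)]) auto
    show "AE x in M. real_cond_exp M (G n) (Y (Suc n)) x = Y n x"
      using step assms(2) by (intro martingale_step) simp
    show "Y (Suc n) \<in> borel_measurable M"
      using step assms(2) by (intro measurable_process) simp
    show "integrable M (\<lambda>x. H x * Y (Suc n) x)" "integrable M (\<lambda>x. H x * Y n x)"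
      using step by (auto intro: assms(4))
  qed
  with step show ?case by simp
qed

lemma square_integrable_process:
  assumes "integrable M (\<lambda>x. (Y m x)\<^sup>2)" "k \<le> m"
  shows "integrable M (\<lambda>x. (Y k x)\<^sup>2)"
  using assms(2)
proof (induction k rule: inc_induct)
  case base
  show ?case by (rule assms(1))
next
  case (step n)
  interpret sigma_finite_subalgebra M "G n"
    using step by (intro sigma_finite_subalgebra_filtration) simp
  have "integrable M (\<lambda>x. (real_cond_exp M (G n) (Y (Suc n)) x)\<^sup>2)"
    using step integrable_process by (intro square_integrable_real_cond_exp) auto
  moreover have "(\<lambda>x. (Y n x)\<^sup>2) \<in> borel_measurable M"
    using step measurable_process by simp
  moreover have "AE x in M. (real_cond_exp M (G n) (Y (Suc n)) x)\<^sup>2 = (Y n x)\<^sup>2"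
    using martingale_step[OF step(2)] by eventually_elim simp
  ultimately show ?case by (rule integrable_cong_AE_imp)
qed

end

locale square_integrable_martingale = finite_martingale +
  assumes square_integrable_final: "integrable M (\<lambda>x. (Y m x)\<^sup>2)"
begin

lemma square_integrable: "k \<le> m \<Longrightarrow> integrable M (\<lambda>x. (Y k x)\<^sup>2)"
  by (rule square_integrable_process[OF square_integrable_final])

lemma running_max_adapted:
  "k \<le> m \<Longrightarrow> (\<lambda>x. Max ((\<lambda>i. Y i x) ` {..k})) \<in> borel_measurable (G k)"
  by (rule borel_measurable_Max) (auto intro!: measurable_filtration_mono[OF _ _ adapted])

lemma measurable_running_max:
  "k \<le> m \<Longrightarrow> (\<lambda>x. Max ((\<lambda>i. Y i x) ` {..k})) \<in> borel_measurable M"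
  using measurable_from_subalg[OF subalgebra_filtration running_max_adapted] by blast

lemma square_integrable_running_max:
  assumes "k \<le> m"
  shows "integrable M (\<lambda>x. (Max ((\<lambda>i. Y i x) ` {..k}))\<^sup>2)"
proof (rule Bochner_Integration.integrable_bound)
  show "integrable M (\<lambda>x. \<Sum>i\<le>k. (Y i x)\<^sup>2)"
    using assms by (intro Bochner_Integration.integrable_sum square_integrable) simp
  have "(Max ((\<lambda>i. Y i x) ` {..k}))\<^sup>2 \<le> (\<Sum>i\<le>k. (Y i x)\<^sup>2)" for x
  proof -
    have "Max ((\<lambda>i. Y i x) ` {..k}) \<in> (\<lambda>i. Y i x) ` {..k}"
      by (rule Max_in) auto
    then obtain i where "i \<in> {..k}" "Max ((\<lambda>i. Y i x) ` {..k}) = Y i x"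
      by (rule imageE)
    then show ?thesis using member_le_sum[of i "{..k}" "\<lambda>i. (Y i x)\<^sup>2"] by simp
  qed
  then show "AE x in M. norm ((Max ((\<lambda>i. Y i x) ` {..k}))\<^sup>2) \<le> norm (\<Sum>i\<le>k. (Y i x)\<^sup>2)"
    by (intro always_eventually allI) (simp add: abs_of_nonneg sum_nonneg)
qed (use measurable_running_max[OF assms] in measurable)

lemma integrable_running_max: "k \<le> m \<Longrightarrow> integrable M (\<lambda>x. Max ((\<lambda>i. Y i x) ` {..k}))"
  by (rule square_integrable_imp_integrable[OF measurable_running_max square_integrable_running_max])

lemma integrable_mult_process:
  assumes "H \<in> borel_measurable M" "integrable M (\<lambda>x. (H x)\<^sup>2)" "k \<le> m"
  shows "integrable M (\<lambda>x. H x * Y k x)"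
  using assms measurable_process square_integrable by (intro integrable_mult_of_square_integrable) auto

lemma integral_square_increment:
  "expectation (\<lambda>x. (Y m x - Y 0 x)\<^sup>2)
     = expectation (\<lambda>x. (Y m x)\<^sup>2) - expectation (\<lambda>x. (Y 0 x)\<^sup>2)"
proof -
  have Y0: "Y 0 \<in> borel_measurable M" "integrable M (\<lambda>x. (Y 0 x)\<^sup>2)"
    by (simp_all add: measurable_process square_integrable)
  have "expectation (\<lambda>x. Y 0 x * Y m x) = expectation (\<lambda>x. Y 0 x * Y 0 x)"
    by (rule integral_mult_eq) (simp_all add: adapted integrable_mult_process[OF Y0])
  moreover have "(Y m x - Y 0 x)\<^sup>2 = (Y m x)\<^sup>2 - 2 * (Y 0 x * Y m x) + (Y 0 x)\<^sup>2" for x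
    by (simp add: power2_eq_square algebra_simps)
  ultimately show ?thesis
    using integrable_mult_process[OF Y0, of m] square_integrable[of m] Y0
    by (simp add: power2_eq_square)
qed

lemma running_max_gap_le:
  "expectation (\<lambda>x. (Max ((\<lambda>i. Y i x) ` {..m}) - Y m x)\<^sup>2)
     \<le> expectation (\<lambda>x. (Y m x - Y 0 x)\<^sup>2)"
proof -
  define S where "S j x = Max ((\<lambda>i. Y i x) ` {..j})" for j x
  define H where "H j x = S j x - Y 0 x" for j x
  have H_adapted: "H j \<in> borel_measurable (G j)" if "j \<le> m" for j
    using running_max_adapted[OF that] measurable_filtration_mono[OF _ that adapted[of 0]]
    by (simp add: H_def[abs_def] S_def)
  have H_measurable: "H j \<in> borel_measurable M" if "j \<le> m" for j
    using measurable_from_subalg[OF subalgebra_filtration H_adapted] that by blast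
  have H_square: "integrable M (\<lambda>x. (H j x)\<^sup>2)" if "j \<le> m" for j
    unfolding H_def S_def using that
    by (intro square_integrable_diff measurable_running_max square_integrable_running_max
        measurable_process square_integrable) simp_all
  have H_mult: "integrable M (\<lambda>x. H j x * Y k x)" if "j \<le> m" "k \<le> m" for j k
    using that by (intro integrable_mult_process H_measurable H_square)
  have transform_integrable: "integrable M (\<lambda>x. H j x * (Y (Suc j) x - Y j x))" if "j < m" for j
    using H_mult[of j j] H_mult[of j "Suc j"] that by (simp add: right_diff_distrib)
  have transform_zero: "(\<integral>x. H j x * (Y (Suc j) x - Y j x) \<partial>M) = 0" if "j < m" for j
  proof -
    have "(\<integral>x. H j x * Y (Suc j) x \<partial>M) = (\<integral>x. H j x * Y j x \<partial>M)"
      using that H_adapted H_mult by (intro integral_mult_eq) auto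
    then show ?thesis
      using H_mult[of j j] H_mult[of j "Suc j"] that by (simp add: right_diff_distrib)
  qed
  have "(\<integral>x. (S m x - Y m x)\<^sup>2 - (Y m x - Y 0 x)\<^sup>2 \<partial>M)
      \<le> (\<integral>x. - 2 * (\<Sum>j<m. H j x * (Y (Suc j) x - Y j x)) \<partial>M)"
  proof (rule integral_mono)
    show "integrable M (\<lambda>x. (S m x - Y m x)\<^sup>2 - (Y m x - Y 0 x)\<^sup>2)"
      unfolding S_def
      by (intro Bochner_Integration.integrable_diff square_integrable_diff measurable_running_max
          square_integrable_running_max measurable_process square_integrable) simp_all
    show "integrable M (\<lambda>x. - 2 * (\<Sum>j<m. H j x * (Y (Suc j) x - Y j x)))"
      by (intro integrable_mult_right Bochner_Integration.integrable_sum transform_integrable) simp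
    show "(S m x - Y m x)\<^sup>2 - (Y m x - Y 0 x)\<^sup>2 \<le> - 2 * (\<Sum>j<m. H j x * (Y (Suc j) x - Y j x))"
      for x
      using running_max_pathwise_le[of "\<lambda>i. Y i x" m] by (simp add: H_def S_def)
  qed
  also have "\<dots> = 0"
    using transform_integrable transform_zero by simp
  finally show ?thesis
    unfolding S_def
    by (simp add: measurable_running_max square_integrable_running_max measurable_process
        square_integrable square_integrable_diff)
qed

theorem expectation_running_max_le:
  shows "integrable M (\<lambda>x. Max ((\<lambda>i. Y i x) ` {..m}))"
    and "expectation (\<lambda>x. Max ((\<lambda>i. Y i x) ` {..m}))
           \<le> sqrt 2 * sqrt (expectation (\<lambda>x. (Y m x)\<^sup>2))"
proof -
  let ?S = "\<lambda>x. Max ((\<lambda>i. Y i x) ` {..m})"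
  show int_S: "integrable M ?S" by (rule integrable_running_max) simp
  have gap_square: "integrable M (\<lambda>x. (?S x - Y m x)\<^sup>2)"
    by (intro square_integrable_diff measurable_running_max square_integrable_running_max
        measurable_process square_integrable) simp_all
  have "expectation (Y m) = expectation (Y 0)"
    using integral_mult_eq[of 0 m "\<lambda>_. 1"] integrable_process by simp
  then have "(expectation ?S - expectation (Y 0))\<^sup>2 = (expectation (\<lambda>x. ?S x - Y m x))\<^sup>2"
    using int_S integrable_process[of m] by simp
  also have "\<dots> \<le> expectation (\<lambda>x. (?S x - Y m x)\<^sup>2)"
    using int_S integrable_process[of m] gap_square by (intro square_expectation_le) simp_all
  also have "\<dots> \<le> expectation (\<lambda>x. (Y m x - Y 0 x)\<^sup>2)"
    by (rule running_max_gap_le)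
  also have "\<dots> = expectation (\<lambda>x. (Y m x)\<^sup>2) - expectation (\<lambda>x. (Y 0 x)\<^sup>2)"
    by (rule integral_square_increment)
  finally have "(expectation ?S - expectation (Y 0))\<^sup>2
      \<le> expectation (\<lambda>x. (Y m x)\<^sup>2) - expectation (\<lambda>x. (Y 0 x)\<^sup>2)" .
  moreover have "(expectation (Y 0))\<^sup>2 \<le> expectation (\<lambda>x. (Y 0 x)\<^sup>2)"
    using integrable_process[of 0] square_integrable[of 0] by (intro square_expectation_le) simp_all
  ultimately show "expectation ?S \<le> sqrt 2 * sqrt (expectation (\<lambda>x. (Y m x)\<^sup>2))"
    by (rule le_sqrt_two_mult_sqrt)
qed

end

lemma integrable_integral_le_of_incseq_tendsto:
  fixes f :: "nat \<Rightarrow> 'a \<Rightarrow> real"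
  assumes f: "\<And>n. integrable M (f n)" and bound: "\<And>n. integral\<^sup>L M (f n) \<le> B"
    and mono: "\<And>x. x \<in> space M \<Longrightarrow> incseq (\<lambda>n. f n x)"
    and lim: "\<And>x. x \<in> space M \<Longrightarrow> (\<lambda>n. f n x) \<longlonglongrightarrow> u x"
  shows "integrable M u \<and> integral\<^sup>L M u \<le> B"
proof -
  have u: "u \<in> borel_measurable M"
    using f by (intro borel_measurable_LIMSEQ_real[OF lim]) auto
  have "incseq (\<lambda>n. integral\<^sup>L M (f n))"
    using f mono by (intro incseq_SucI integral_mono) (auto simp: incseq_Suc_iff)
  moreover have "bdd_above (range (\<lambda>n. integral\<^sup>L M (f n)))"
    using bound by (intro bdd_aboveI) auto
  ultimately have ilim: "(\<lambda>n. integral\<^sup>L M (f n)) \<longlonglongrightarrow> (SUP n. integral\<^sup>L M (f n))"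
    by (intro LIMSEQ_incseq_SUP)
  have "AE x in M. mono (\<lambda>n. f n x)" "AE x in M. (\<lambda>n. f n x) \<longlonglongrightarrow> u x"
    using mono lim by auto
  note convergence = integrable_monotone_convergence[OF f this ilim u]
    integral_monotone_convergence[OF f this ilim u]
  moreover have "(SUP n. integral\<^sup>L M (f n)) \<le> B"
    using bound by (intro cSUP_least) auto
  ultimately show ?thesis by simp
qed

definition dyadic_max :: "real \<Rightarrow> (real \<Rightarrow> real) \<Rightarrow> nat \<Rightarrow> real" where
  "dyadic_max T g n = Max ((\<lambda>k. g (T * real k / 2 ^ n)) ` {..2 ^ n})"

lemma dyadic_grid_mem:
  assumes "0 \<le> T" "k \<le> 2 ^ n"
  shows "T * real k / 2 ^ n \<in> {0..T}"
proof -
  have "real k \<le> 2 ^ n"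
    using assms(2) by (metis of_nat_le_iff of_nat_numeral of_nat_power)
  then have "T * real k \<le> T * 2 ^ n"
    using assms(1) by (intro mult_left_mono)
  with assms(1) show ?thesis by (simp add: field_simps)
qed

lemma incseq_dyadic_max: "incseq (dyadic_max T g)"
proof (rule incseq_SucI)
  fix n
  have "(\<lambda>k. g (T * real k / 2 ^ n)) ` {..2 ^ n} \<subseteq> (\<lambda>k. g (T * real k / 2 ^ Suc n)) ` {..2 ^ Suc n}"
  proof
    fix y assume "y \<in> (\<lambda>k. g (T * real k / 2 ^ n)) ` {..2 ^ n}"
    then obtain k where "k \<le> 2 ^ n" "y = g (T * real k / 2 ^ n)" by auto
    then have "2 * k \<le> 2 ^ Suc n" "y = g (T * real (2 * k) / 2 ^ Suc n)" by simp_all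
    then show "y \<in> (\<lambda>k. g (T * real k / 2 ^ Suc n)) ` {..2 ^ Suc n}" by blast
  qed
  then show "dyadic_max T g n \<le> dyadic_max T g (Suc n)"
    unfolding dyadic_max_def by (rule Max_mono) auto
qed

lemma dyadic_approx_below:
  assumes "0 < T" "s \<in> {0..T}"
  shows "\<exists>k\<le>2 ^ n. s - T / 2 ^ n \<le> T * real k / 2 ^ n \<and> T * real k / 2 ^ n \<le> s"
proof (intro exI conjI)
  define k where "k = nat \<lfloor>s * 2 ^ n / T\<rfloor>"
  have "0 \<le> s * 2 ^ n / T" using assms by simp
  then have k: "real k \<le> s * 2 ^ n / T" "s * 2 ^ n / T < real k + 1"
    unfolding k_def by linarith+
  have "s * 2 ^ n / T \<le> 2 ^ n" using assms by (simp add: field_simps)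
  with k(1) have "real k \<le> 2 ^ n" by linarith
  then show "k \<le> 2 ^ n" by (metis of_nat_le_iff of_nat_numeral of_nat_power)
  show "T * real k / 2 ^ n \<le> s"
    using k(1) assms(1) by (simp add: field_simps)
  have "s * 2 ^ n < T * real k + T"
    using k(2) assms(1) by (simp add: field_simps)
  then have "s < T * real k / 2 ^ n + T / 2 ^ n"
    by (simp add: field_simps)
  then show "s - T / 2 ^ n \<le> T * real k / 2 ^ n" by linarith
qed

lemma dyadic_max_tendsto_Sup:
  assumes "0 < T" and g: "continuous_on {0..T} g"
  shows "dyadic_max T g \<longlonglongrightarrow> (SUP s\<in>{0..T}. g s)"
proof -
  obtain s0 where s0: "s0 \<in> {0..T}" "\<And>s. s \<in> {0..T} \<Longrightarrow> g s \<le> g s0"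
    using continuous_attains_sup[OF compact_Icc _ g] assms(1) by auto
  have Sup_eq: "(SUP s\<in>{0..T}. g s) = g s0"
    using s0 by (intro antisym cSUP_least cSUP_upper2[of _ _ s0] bdd_aboveI2) auto
  have "\<forall>n. \<exists>k\<le>2 ^ n. s0 - T / 2 ^ n \<le> T * real k / 2 ^ n \<and> T * real k / 2 ^ n \<le> s0"
    using dyadic_approx_below[OF assms(1) s0(1)] by blast
  then obtain k where
    "\<forall>n. k n \<le> 2 ^ n \<and> s0 - T / 2 ^ n \<le> T * real (k n) / 2 ^ n \<and> T * real (k n) / 2 ^ n \<le> s0"
    unfolding choice_iff by blast
  then have k: "\<And>n. k n \<le> 2 ^ n"
    "\<And>n. s0 - T / 2 ^ n \<le> T * real (k n) / 2 ^ n" "\<And>n. T * real (k n) / 2 ^ n \<le> s0"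
    by simp_all
  define t where "t n = T * real (k n) / 2 ^ n" for n
  have "(\<lambda>n. s0 - T / 2 ^ n) \<longlonglongrightarrow> s0 - 0"
    by (intro tendsto_intros LIMSEQ_divide_realpow_zero) simp
  then have "t \<longlonglongrightarrow> s0"
    by (intro tendsto_sandwich[of "\<lambda>n. s0 - T / 2 ^ n" t _ "\<lambda>_. s0"])
       (auto intro!: always_eventually k simp: t_def)
  moreover have "t n \<in> {0..T}" for n
    unfolding t_def using assms(1) k(1) by (intro dyadic_grid_mem) auto
  ultimately have g_t: "(\<lambda>n. g (t n)) \<longlonglongrightarrow> g s0"
    by (intro continuous_on_tendsto_compose[OF g _ s0(1)]) auto
  have "g (t n) \<le> dyadic_max T g n" for n
    unfolding dyadic_max_def t_def using k(1) by (intro Max_ge) auto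
  moreover have "dyadic_max T g n \<le> g s0" for n
    unfolding dyadic_max_def using assms(1) dyadic_grid_mem by (auto intro!: s0(2))
  ultimately show ?thesis
    unfolding Sup_eq
    by (intro tendsto_sandwich[OF always_eventually always_eventually g_t tendsto_const]) simp_all
qed

lemma cont_martingale_sample:
  assumes "cont_martingale M F T X" "mono t" "\<And>k. k \<le> m \<Longrightarrow> t k \<in> {0..T}"
  shows "finite_martingale M (\<lambda>k. F (t k)) (\<lambda>k. X (t k)) m"
proof (rule finite_martingale.intro)
  note cm = assms(1)[unfolded cont_martingale_def]
  show "prob_space M" using cm by blast
  have nest: "\<And>s t. 0 \<le> s \<Longrightarrow> s \<le> t \<Longrightarrow> t \<le> T \<Longrightarrow> sets (F s) \<subseteq> sets (F t)"
    and mart: "\<And>s t. 0 \<le> s \<Longrightarrow> s \<le> t \<Longrightarrow> t \<le> T \<Longrightarrow>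
        (AE x in M. real_cond_exp M (F s) (X t) x = X s x)"
    using cm by blast+
  show "finite_martingale_axioms M (\<lambda>k. F (t k)) (\<lambda>k. X (t k)) m"
  proof (rule finite_martingale_axioms.intro)
    show "subalgebra M (F (t k))" "X (t k) \<in> borel_measurable (F (t k))" "integrable M (X (t k))"
      if "k \<le> m" for k
      using cm assms(3)[OF that] by blast+
    show "sets (F (t i)) \<subseteq> sets (F (t k))" if "i \<le> k" "k \<le> m" for i k
      using nest assms(3)[of i] assms(3)[of k] monoD[OF assms(2) that(1)] that by simp
    show "AE x in M. real_cond_exp M (F (t k)) (X (t (Suc k))) x = X (t k) x" if "k < m" for k
      using mart assms(3)[of k] assms(3)[of "Suc k"] monoD[OF assms(2), of k "Suc k"] that by simp
  qed
qed

theorem mainTheorem6: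
  fixes M :: "'a measure" and F :: "real \<Rightarrow> 'a measure"
    and X :: "real \<Rightarrow> 'a \<Rightarrow> real" and T :: real
  assumes "T > 0"
    and "cont_martingale M F T X"
    and "\<exists>c. \<forall>\<omega>\<in>space M. X 0 \<omega> = c"
    and "integrable M (\<lambda>\<omega>. (X T \<omega>)\<^sup>2)"
  shows "integrable M (\<lambda>\<omega>. SUP s\<in>{0..T}. X s \<omega>) \<and>
         (\<integral>\<omega>. (SUP s\<in>{0..T}. X s \<omega>) \<partial>M) \<le> sqrt 2 * sqrt (\<integral>\<omega>. (X T \<omega>)\<^sup>2 \<partial>M)"
proof -
  have grid: "mono (\<lambda>k. T * real k / 2 ^ n)" "\<And>k. k \<le> 2 ^ n \<Longrightarrow> T * real k / 2 ^ n \<in> {0..T}"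
    for n :: nat
    using assms(1) by (auto intro!: monoI divide_right_mono mult_left_mono dyadic_grid_mem
        simp del: atLeastAtMost_iff)
  have "square_integrable_martingale M (\<lambda>k. F (T * real k / 2 ^ n)) (\<lambda>k. X (T * real k / 2 ^ n)) (2 ^ n)"
    for n :: nat
    using cont_martingale_sample[OF assms(2) grid] assms(4)
    by (simp add: square_integrable_martingale_def square_integrable_martingale_axioms_def)
  note sampled = square_integrable_martingale.expectation_running_max_le[OF this]
  have "integrable M (\<lambda>x. dyadic_max T (\<lambda>s. X s x) n)"
    "(\<integral>x. dyadic_max T (\<lambda>s. X s x) n \<partial>M) \<le> sqrt 2 * sqrt (\<integral>x. (X T x)\<^sup>2 \<partial>M)" for n
    using sampled[of n] by (simp_all add: dyadic_max_def)
  moreover have "dyadic_max T (\<lambda>s. X s x) \<longlonglongrightarrow> (SUP s\<in>{0..T}. X s x)" if "x \<in> space M" for x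
    using assms(2) that unfolding cont_martingale_def by (intro dyadic_max_tendsto_Sup assms(1)) blast
  ultimately show ?thesis
    using incseq_dyadic_max
    by (intro integrable_integral_le_of_incseq_tendsto[where f="\<lambda>n x. dyadic_max T (\<lambda>s. X s x) n"])
      simp_all
qed

end
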